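(* Let $\mathbb{C}$ be a regular majority category. For any regular epimorphism $f:X\to Y$ in $\mathbb{C}$ and any reflexive relations $R,S$ on $X$, $f(R\cap S)=f(R)\cap f(S)$.
   Context: A category is regular if it has finite limits and coequalizers of kernel pairs and regular epimorphisms are pullback-stable; morphisms factor as regular epi followed by mono. A relation on $X$ is a subobject of $X\times X$, reflexive if the diagonal factors through it; $\cap$ is intersection (pullback) of subobjects. $f(R)$ denotes the image of $R$ under $f\times f$ (mono part of the regular epi–mono factorization of $(f\times f)r$ for $r$ representing $R$). For $w:S\to W$ and subobject $A$ of $W$, $w\in_S A$ means $w$ factors through a representative of $A$. A ternary relation $R\leqslant X\times Y\times Z$ is majority-selecting if for all $S$ and $x,x':S\to X$, $y,y':S\to Y$, $z,z':S\to Z$: $(x,y,z')\in_S R$, $(x,y',z)\in_S R$, $(x',y,z)\in_S R$ imply $(x,y,z)\in_S R$. A category with products is a majority category if all its ternary relations are majority-selecting. *)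

theory Defs
  imports Main
begin

(* A category presented by its objects, arrows, domain, codomain, identities
   and composition.  Comp C g f is "g after f". *)
record ('o, 'a) category =
  Obj  :: "'o set"
  Arr  :: "'a set"
  Dom  :: "'a \<Rightarrow> 'o"
  Cod  :: "'a \<Rightarrow> 'o"
  Id   :: "'o \<Rightarrow> 'a"
  Comp :: "'a \<Rightarrow> 'a \<Rightarrow> 'a"

definition hom :: "('o, 'a) category \<Rightarrow> 'o \<Rightarrow> 'o \<Rightarrow> 'a set" where
  "hom C X Y = {f \<in> Arr C. Dom C f = X \<and> Cod C f = Y}"

definition is_category :: "('o, 'a) category \<Rightarrow> bool" where
  "is_category C \<longleftrightarrow>
     (\<forall>f\<in>Arr C. Dom C f \<in> Obj C \<and> Cod C f \<in> Obj C) \<and>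
     (\<forall>X\<in>Obj C. Id C X \<in> hom C X X) \<and>
     (\<forall>f g. f \<in> Arr C \<and> g \<in> Arr C \<and> Cod C f = Dom C g
        \<longrightarrow> Comp C g f \<in> hom C (Dom C f) (Cod C g)) \<and>
     (\<forall>f\<in>Arr C. Comp C f (Id C (Dom C f)) = f \<and> Comp C (Id C (Cod C f)) f = f) \<and>
     (\<forall>f g h. f \<in> Arr C \<and> g \<in> Arr C \<and> h \<in> Arr C \<and> Cod C f = Dom C g \<and> Cod C g = Dom C h
        \<longrightarrow> Comp C h (Comp C g f) = Comp C (Comp C h g) f)"

definition mono :: "('o, 'a) category \<Rightarrow> 'a \<Rightarrow> bool" where
  "mono C m \<longleftrightarrow> m \<in> Arr C \<and>
     (\<forall>g h. g \<in> Arr C \<and> h \<in> Arr C \<and> Dom C g = Dom C h \<and> Cod C g = Dom C m \<and> Cod C h = Dom C m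
        \<and> Comp C m g = Comp C m h \<longrightarrow> g = h)"

definition is_terminal :: "('o, 'a) category \<Rightarrow> 'o \<Rightarrow> bool" where
  "is_terminal C T \<longleftrightarrow> T \<in> Obj C \<and> (\<forall>X\<in>Obj C. \<exists>!u. u \<in> hom C X T)"

definition is_pullback :: "('o, 'a) category \<Rightarrow> 'a \<Rightarrow> 'a \<Rightarrow> 'a \<Rightarrow> 'a \<Rightarrow> bool" where
  "is_pullback C f g p q \<longleftrightarrow>
     f \<in> Arr C \<and> g \<in> Arr C \<and> p \<in> Arr C \<and> q \<in> Arr C \<and>
     Cod C f = Cod C g \<and> Dom C p = Dom C q \<and> Cod C p = Dom C f \<and> Cod C q = Dom C g \<and>
     Comp C f p = Comp C g q \<and>
     (\<forall>x y. x \<in> Arr C \<and> y \<in> Arr C \<and> Dom C x = Dom C y \<and> Cod C x = Dom C f \<and> Cod C y = Dom C g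
        \<and> Comp C f x = Comp C g y
        \<longrightarrow> (\<exists>!u. u \<in> hom C (Dom C x) (Dom C p) \<and> Comp C p u = x \<and> Comp C q u = y))"

definition has_finite_limits :: "('o, 'a) category \<Rightarrow> bool" where
  "has_finite_limits C \<longleftrightarrow> (\<exists>T. is_terminal C T) \<and>
     (\<forall>f g. f \<in> Arr C \<and> g \<in> Arr C \<and> Cod C f = Cod C g \<longrightarrow> (\<exists>p q. is_pullback C f g p q))"

definition is_coequalizer :: "('o, 'a) category \<Rightarrow> 'a \<Rightarrow> 'a \<Rightarrow> 'a \<Rightarrow> bool" where
  "is_coequalizer C a b e \<longleftrightarrow>
     a \<in> Arr C \<and> b \<in> Arr C \<and> e \<in> Arr C \<and> Dom C a = Dom C b \<and> Cod C a = Cod C b \<and>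
     Dom C e = Cod C a \<and> Comp C e a = Comp C e b \<and>
     (\<forall>h. h \<in> Arr C \<and> Dom C h = Cod C a \<and> Comp C h a = Comp C h b
        \<longrightarrow> (\<exists>!u. u \<in> hom C (Cod C e) (Cod C h) \<and> Comp C u e = h))"

definition regular_epi :: "('o, 'a) category \<Rightarrow> 'a \<Rightarrow> bool" where
  "regular_epi C e \<longleftrightarrow> (\<exists>a b. is_coequalizer C a b e)"

(* the kernel pair (p,q) of f is a pullback of f along itself *)
definition has_coequalizers_of_kernel_pairs :: "('o, 'a) category \<Rightarrow> bool" where
  "has_coequalizers_of_kernel_pairs C \<longleftrightarrow>
     (\<forall>f p q. is_pullback C f f p q \<longrightarrow> (\<exists>e. is_coequalizer C p q e))"

(* in a pullback square f o p = g o q, q is the pullback of f along g *)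
definition regular_epis_pullback_stable :: "('o, 'a) category \<Rightarrow> bool" where
  "regular_epis_pullback_stable C \<longleftrightarrow>
     (\<forall>f g p q. is_pullback C f g p q \<and> regular_epi C f \<longrightarrow> regular_epi C q)"

definition regular_category :: "('o, 'a) category \<Rightarrow> bool" where
  "regular_category C \<longleftrightarrow> is_category C \<and> has_finite_limits C \<and>
     has_coequalizers_of_kernel_pairs C \<and> regular_epis_pullback_stable C"

definition is_product :: "('o, 'a) category \<Rightarrow> 'o \<Rightarrow> 'o \<Rightarrow> 'o \<Rightarrow> 'a \<Rightarrow> 'a \<Rightarrow> bool" where
  "is_product C X Y P p1 p2 \<longleftrightarrow> X \<in> Obj C \<and> Y \<in> Obj C \<and> P \<in> Obj C \<and>
     p1 \<in> hom C P X \<and> p2 \<in> hom C P Y \<and>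
     (\<forall>T x y. x \<in> hom C T X \<and> y \<in> hom C T Y
        \<longrightarrow> (\<exists>!u. u \<in> hom C T P \<and> Comp C p1 u = x \<and> Comp C p2 u = y))"

definition is_product3 :: "('o, 'a) category \<Rightarrow> 'o \<Rightarrow> 'o \<Rightarrow> 'o \<Rightarrow> 'o \<Rightarrow> 'a \<Rightarrow> 'a \<Rightarrow> 'a \<Rightarrow> bool" where
  "is_product3 C X Y Z P p1 p2 p3 \<longleftrightarrow> X \<in> Obj C \<and> Y \<in> Obj C \<and> Z \<in> Obj C \<and> P \<in> Obj C \<and>
     p1 \<in> hom C P X \<and> p2 \<in> hom C P Y \<and> p3 \<in> hom C P Z \<and>
     (\<forall>T x y z. x \<in> hom C T X \<and> y \<in> hom C T Y \<and> z \<in> hom C T Z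
        \<longrightarrow> (\<exists>!u. u \<in> hom C T P \<and> Comp C p1 u = x \<and> Comp C p2 u = y \<and> Comp C p3 u = z))"

definition has_binary_products :: "('o, 'a) category \<Rightarrow> bool" where
  "has_binary_products C \<longleftrightarrow>
     (\<forall>X\<in>Obj C. \<forall>Y\<in>Obj C. \<exists>P p1 p2. is_product C X Y P p1 p2)"

(* (x,y,z) \<in>_S R, for the ternary relation represented by the mono r into the
   product (P,p1,p2,p3) and generalized elements x,y,z with domain S *)
definition gen_mem3 :: "('o, 'a) category \<Rightarrow> 'a \<Rightarrow> 'a \<Rightarrow> 'a \<Rightarrow> 'a \<Rightarrow> 'a \<Rightarrow> 'a \<Rightarrow> 'a \<Rightarrow> bool" where
  "gen_mem3 C p1 p2 p3 r x y z \<longleftrightarrow>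
     (\<exists>u. u \<in> hom C (Dom C x) (Dom C r) \<and> Comp C p1 (Comp C r u) = x \<and>
          Comp C p2 (Comp C r u) = y \<and> Comp C p3 (Comp C r u) = z)"

definition majority_selecting ::
  "('o, 'a) category \<Rightarrow> 'o \<Rightarrow> 'o \<Rightarrow> 'o \<Rightarrow> 'a \<Rightarrow> 'a \<Rightarrow> 'a \<Rightarrow> 'a \<Rightarrow> bool" where
  "majority_selecting C X Y Z p1 p2 p3 r \<longleftrightarrow>
     (\<forall>S x x' y y' z z'. x \<in> hom C S X \<and> x' \<in> hom C S X \<and> y \<in> hom C S Y \<and> y' \<in> hom C S Y \<and>
        z \<in> hom C S Z \<and> z' \<in> hom C S Z \<and>
        gen_mem3 C p1 p2 p3 r x y z' \<and> gen_mem3 C p1 p2 p3 r x y' z \<and> gen_mem3 C p1 p2 p3 r x' y z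
        \<longrightarrow> gen_mem3 C p1 p2 p3 r x y z)"

definition majority_category :: "('o, 'a) category \<Rightarrow> bool" where
  "majority_category C \<longleftrightarrow> has_binary_products C \<and>
     (\<forall>X Y Z P p1 p2 p3 r. is_product3 C X Y Z P p1 p2 p3 \<and> mono C r \<and> Cod C r = P
        \<longrightarrow> majority_selecting C X Y Z p1 p2 p3 r)"

definition sub_le :: "('o, 'a) category \<Rightarrow> 'a \<Rightarrow> 'a \<Rightarrow> bool" where
  "sub_le C m n \<longleftrightarrow> m \<in> Arr C \<and> n \<in> Arr C \<and> Cod C m = Cod C n \<and>
     (\<exists>u. u \<in> hom C (Dom C m) (Dom C n) \<and> Comp C n u = m)"

definition sub_eq :: "('o, 'a) category \<Rightarrow> 'a \<Rightarrow> 'a \<Rightarrow> bool" where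
  "sub_eq C m n \<longleftrightarrow> sub_le C m n \<and> sub_le C n m"

definition is_image :: "('o, 'a) category \<Rightarrow> 'a \<Rightarrow> 'a \<Rightarrow> bool" where
  "is_image C g m \<longleftrightarrow> mono C m \<and>
     (\<exists>e. regular_epi C e \<and> Dom C e = Dom C g \<and> Cod C e = Dom C m \<and> Comp C m e = g)"

definition reflexive_rel :: "('o, 'a) category \<Rightarrow> 'o \<Rightarrow> 'o \<Rightarrow> 'a \<Rightarrow> 'a \<Rightarrow> 'a \<Rightarrow> bool" where
  "reflexive_rel C X P p1 p2 r \<longleftrightarrow>
     (\<forall>d. d \<in> hom C X P \<and> Comp C p1 d = Id C X \<and> Comp C p2 d = Id C X
        \<longrightarrow> (\<exists>u. u \<in> hom C X (Dom C r) \<and> Comp C r u = d))"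

end

theory Submission
  imports Defs
begin

(* Write R \<inter> S for the pullback of r and s.  The inclusion f(R \<inter> S) \<le> f(R) \<inter> f(S) holds in
   any regular category, since the image of a map is the least subobject it factors through.
   For the converse take a generalized element (y1, y2) of f(R) \<inter> f(S).  Locally, that is after
   pulling back along regular epis, (y1, y2) = (f x, f y) with (x, y) \<in> R and
   (y1, y2) = (f x', f y') with (x', y') \<in> S.  The ternary relation
   {(f u, w, f v) | (u, v) \<in> S, (u, w) \<in> R} contains (f x, y, f x), (f x', x', f y') and
   (f y, y, f y) by reflexivity, so by majority it contains (y1, y, y2): there are (c, d) \<in> S with
   (c, y) \<in> R, f c = y1 and f d = y2.  The relation {(u, u', f v) | (u, v) \<in> R, (u', v) \<in> S}
   contains (c, c, f c), (c, y, f y) and (d, c, f d), so by majority it contains (c, c, y2): some v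
   has (c, v) \<in> R \<inter> S and f v = y2.  Regular epis compose and are orthogonal to monos, so these
   local witnesses give a factorization of f(R) \<inter> f(S) through f(R \<inter> S). *)

section \<open>Categories, pullbacks and products\<close>

definition factors_through :: "('o, 'a) category \<Rightarrow> 'a \<Rightarrow> 'a \<Rightarrow> bool" where
  "factors_through C h g \<longleftrightarrow> (\<exists>k. k \<in> hom C (Dom C h) (Dom C g) \<and> Comp C g k = h)"

definition gen_mem2 :: "('o, 'a) category \<Rightarrow> 'a \<Rightarrow> 'a \<Rightarrow> 'a \<Rightarrow> 'a \<Rightarrow> 'a \<Rightarrow> bool" where
  "gen_mem2 C p1 p2 r x y \<longleftrightarrow>
     (\<exists>u. u \<in> hom C (Dom C x) (Dom C r) \<and> Comp C (Comp C p1 r) u = x \<and> Comp C (Comp C p2 r) u = y)"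

lemma ex1_unique: "\<exists>!x. P x \<Longrightarrow> P a \<Longrightarrow> P b \<Longrightarrow> a = b"
  by blast

locale cat =
  fixes C :: "('o, 'a) category"
  assumes is_category: "is_category C"
begin

abbreviation cmp (infixl "\<cdot>" 55) where "g \<cdot> f \<equiv> Comp C g f"

lemma in_hom [simp]: "f \<in> hom C A B \<longleftrightarrow> f \<in> Arr C \<and> Dom C f = A \<and> Cod C f = B"
  by (simp add: hom_def)

lemma
  assumes "f \<in> Arr C" "g \<in> Arr C" "Cod C f = Dom C g"
  shows arr_comp [simp]: "g \<cdot> f \<in> Arr C"
    and dom_comp [simp]: "Dom C (g \<cdot> f) = Dom C f"
    and cod_comp [simp]: "Cod C (g \<cdot> f) = Cod C g"
  using is_category assms unfolding is_category_def hom_def by auto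

(* The simplifier normalises composites to the left-nested form h \<cdot> g \<cdot> f; an equation g \<cdot> f = y
   is applied inside a longer composite h \<cdot> g \<cdot> f through comp_eq_postcomp. *)
lemma comp_assoc [simp]:
  "f \<in> Arr C \<Longrightarrow> g \<in> Arr C \<Longrightarrow> h \<in> Arr C \<Longrightarrow> Cod C f = Dom C g \<Longrightarrow> Cod C g = Dom C h
   \<Longrightarrow> h \<cdot> (g \<cdot> f) = h \<cdot> g \<cdot> f"
  using is_category unfolding is_category_def by metis

lemma comp_id [simp]: "f \<in> Arr C \<Longrightarrow> Dom C f = A \<Longrightarrow> f \<cdot> Id C A = f"
  using is_category unfolding is_category_def by blast

lemma comp_eq_postcomp:
  "f \<cdot> x = y \<Longrightarrow> x \<in> Arr C \<Longrightarrow> f \<in> Arr C \<Longrightarrow> g \<in> Arr C \<Longrightarrow> Cod C x = Dom C f \<Longrightarrow> Cod C f = Dom C g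
   \<Longrightarrow> g \<cdot> f \<cdot> x = g \<cdot> y"
  by (subst comp_assoc[symmetric]) simp_all

lemma cod_in_obj: "f \<in> Arr C \<Longrightarrow> Cod C f \<in> Obj C"
  using is_category unfolding is_category_def by blast

lemma id_in_hom: "A \<in> Obj C \<Longrightarrow> Id C A \<in> hom C A A"
  using is_category unfolding is_category_def by blast

lemma id_cod_in_hom: "f \<in> Arr C \<Longrightarrow> Id C (Cod C f) \<in> hom C (Cod C f) (Cod C f)"
  using is_category id_in_hom unfolding is_category_def by blast

lemma id_dom_in_hom: "f \<in> Arr C \<Longrightarrow> Id C (Dom C f) \<in> hom C (Dom C f) (Dom C f)"
  using is_category id_in_hom unfolding is_category_def by blast

lemma id_comp [simp]: "f \<in> Arr C \<Longrightarrow> Cod C f = B \<Longrightarrow> Id C B \<cdot> f = f"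
  using is_category unfolding is_category_def by blast

lemma mono_cancel:
  assumes "mono C m" "g \<in> hom C T (Dom C m)" "h \<in> hom C T (Dom C m)" "m \<cdot> g = m \<cdot> h"
  shows "g = h"
proof -
  have "\<forall>g h. g \<in> Arr C \<and> h \<in> Arr C \<and> Dom C g = Dom C h \<and> Cod C g = Dom C m \<and> Cod C h = Dom C m
      \<and> m \<cdot> g = m \<cdot> h \<longrightarrow> g = h"
    using assms(1) unfolding mono_def by blast
  then show ?thesis
    using assms(2-4) by (elim allE[of _ g] allE[of _ h]) simp
qed

lemma monoI:
  assumes "m \<in> Arr C"
    and "\<And>T g h. g \<in> hom C T (Dom C m) \<Longrightarrow> h \<in> hom C T (Dom C m) \<Longrightarrow> m \<cdot> g = m \<cdot> h \<Longrightarrow> g = h"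
  shows "mono C m"
  unfolding mono_def using assms by (metis in_hom)

lemma regular_epi_arr: "regular_epi C e \<Longrightarrow> e \<in> Arr C"
  unfolding regular_epi_def is_coequalizer_def by blast

lemma coequalizerD:
  assumes "is_coequalizer C a b e"
  shows "a \<in> Arr C" "b \<in> hom C (Dom C a) (Cod C a)" "e \<in> hom C (Cod C a) (Cod C e)" "e \<cdot> a = e \<cdot> b"
  using assms unfolding is_coequalizer_def in_hom by (elim conjE; simp)+

lemma coequalizer_univ:
  assumes "is_coequalizer C a b e" "h \<in> hom C (Cod C a) B" "h \<cdot> a = h \<cdot> b"
  shows "\<exists>!u. u \<in> hom C (Cod C e) B \<and> u \<cdot> e = h"
proof -
  have "\<forall>h. h \<in> Arr C \<and> Dom C h = Cod C a \<and> h \<cdot> a = h \<cdot> b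
      \<longrightarrow> (\<exists>!u. u \<in> hom C (Cod C e) (Cod C h) \<and> u \<cdot> e = h)"
    using assms(1) unfolding is_coequalizer_def by blast
  then show ?thesis
    using assms(2,3) by (elim allE[of _ h]) simp
qed

lemma regular_epi_cancel:
  assumes "regular_epi C e" "g \<in> hom C (Cod C e) B" "h \<in> hom C (Cod C e) B" "g \<cdot> e = h \<cdot> e"
  shows "g = h"
proof -
  obtain a b where co: "is_coequalizer C a b e"
    using assms(1) unfolding regular_epi_def by blast
  note e = coequalizerD[OF co]
  have "g \<cdot> e \<in> hom C (Cod C a) B" "g \<cdot> e \<cdot> a = g \<cdot> e \<cdot> b"
    using e assms(2) by (simp_all add: comp_eq_postcomp[OF e(4)])
  then have "\<exists>!u. u \<in> hom C (Cod C e) B \<and> u \<cdot> e = g \<cdot> e"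
    by (intro coequalizer_univ[OF co])
  then show ?thesis
    by (rule ex1_unique) (use assms in simp_all)
qed

lemma sub_le_iff:
  "sub_le C m n \<longleftrightarrow> m \<in> Arr C \<and> n \<in> Arr C \<and> Cod C m = Cod C n \<and> factors_through C m n"
  unfolding sub_le_def factors_through_def by blast

lemma factors_throughE:
  assumes "factors_through C h g" "g \<in> Arr C"
  obtains k where "k \<in> hom C (Dom C h) (Dom C g)" "g \<cdot> k = h" "h \<in> hom C (Dom C h) (Cod C g)"
proof -
  obtain k where k: "k \<in> hom C (Dom C h) (Dom C g)" "g \<cdot> k = h"
    using assms(1) unfolding factors_through_def by blast
  have "g \<cdot> k \<in> hom C (Dom C k) (Cod C g)"
    using k(1) assms(2) by simp
  then have "h \<in> hom C (Dom C h) (Cod C g)"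
    using k by simp
  then show ?thesis
    using that k by blast
qed

lemma factors_through_comp:
  assumes "factors_through C h g" "g \<in> Arr C" "t \<in> hom C T (Dom C h)"
  shows "factors_through C (h \<cdot> t) g"
proof -
  obtain k where k: "k \<in> hom C (Dom C h) (Dom C g)" "g \<cdot> k = h" "h \<in> hom C (Dom C h) (Cod C g)"
    using assms(1,2) by (rule factors_throughE)
  show ?thesis
    unfolding factors_through_def using k(1,3) assms(2,3) k(2) by (intro exI[of _ "k \<cdot> t"]) simp
qed

lemma pullbackD:
  assumes "is_pullback C f g p q"
  shows "f \<in> Arr C" "g \<in> Arr C" "p \<in> hom C (Dom C p) (Dom C f)" "q \<in> hom C (Dom C p) (Dom C g)"
    "Cod C f = Cod C g" "f \<cdot> p = g \<cdot> q"
  using assms unfolding is_pullback_def in_hom by (elim conjE; simp)+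

lemma pullback_univ:
  assumes "is_pullback C f g p q" "x \<in> hom C T (Dom C f)" "y \<in> hom C T (Dom C g)" "f \<cdot> x = g \<cdot> y"
  shows "\<exists>!k. k \<in> hom C T (Dom C p) \<and> p \<cdot> k = x \<and> q \<cdot> k = y"
proof -
  have "\<forall>x y. x \<in> Arr C \<and> y \<in> Arr C \<and> Dom C x = Dom C y \<and> Cod C x = Dom C f
      \<and> Cod C y = Dom C g \<and> f \<cdot> x = g \<cdot> y
      \<longrightarrow> (\<exists>!u. u \<in> hom C (Dom C x) (Dom C p) \<and> p \<cdot> u = x \<and> q \<cdot> u = y)"
    using assms(1) unfolding is_pullback_def by blast
  then show ?thesis
    using assms(2-4) by (elim allE[of _ x] allE[of _ y]) simp
qed

lemma pullback_lift:
  assumes "is_pullback C f g p q" "x \<in> hom C T (Dom C f)" "y \<in> hom C T (Dom C g)" "f \<cdot> x = g \<cdot> y"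
  obtains k where "k \<in> hom C T (Dom C p)" "p \<cdot> k = x" "q \<cdot> k = y"
  using ex1_implies_ex[OF pullback_univ[OF assms]] by blast

lemma pullback_ext:
  assumes pb: "is_pullback C f g p q" and k: "k \<in> hom C T (Dom C p)" "k' \<in> hom C T (Dom C p)"
    and eq: "p \<cdot> k = p \<cdot> k'" "q \<cdot> k = q \<cdot> k'"
  shows "k = k'"
proof -
  note P = pullbackD[OF pb]
  have "f \<cdot> p \<cdot> k = g \<cdot> q \<cdot> k"
    using P k by simp
  then have "\<exists>!u. u \<in> hom C T (Dom C p) \<and> p \<cdot> u = p \<cdot> k \<and> q \<cdot> u = q \<cdot> k"
    using P k by (intro pullback_univ[OF pb]) simp_all
  then show ?thesis
    by (rule ex1_unique) (use k eq in simp_all)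
qed

lemma productD:
  assumes "is_product C A B P p1 p2"
  shows "p1 \<in> hom C P A" "p2 \<in> hom C P B" "A \<in> Obj C" "B \<in> Obj C" "P \<in> Obj C"
  using assms unfolding is_product_def by blast+

lemma product_univ:
  assumes "is_product C A B P p1 p2" "x \<in> hom C T A" "y \<in> hom C T B"
  shows "\<exists>!u. u \<in> hom C T P \<and> p1 \<cdot> u = x \<and> p2 \<cdot> u = y"
  using assms unfolding is_product_def by blast

lemma product_pair:
  assumes "is_product C A B P p1 p2" "x \<in> hom C T A" "y \<in> hom C T B"
  obtains u where "u \<in> hom C T P" "p1 \<cdot> u = x" "p2 \<cdot> u = y"
  using ex1_implies_ex[OF product_univ[OF assms]] by blast

lemma product_ext:
  assumes pr: "is_product C A B P p1 p2" and u: "u \<in> hom C T P" "u' \<in> hom C T P"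
    and eq: "p1 \<cdot> u = p1 \<cdot> u'" "p2 \<cdot> u = p2 \<cdot> u'"
  shows "u = u'"
proof -
  note PP = productD[OF pr]
  have "\<exists>!v. v \<in> hom C T P \<and> p1 \<cdot> v = p1 \<cdot> u \<and> p2 \<cdot> v = p2 \<cdot> u"
    using PP u by (intro product_univ[OF pr]) simp_all
  then show ?thesis
    by (rule ex1_unique) (use u eq in simp_all)
qed

lemma product3D:
  assumes "is_product3 C A B D P p1 p2 p3"
  shows "p1 \<in> hom C P A" "p2 \<in> hom C P B" "p3 \<in> hom C P D"
  using assms unfolding is_product3_def by blast+

lemma product3_tuple:
  assumes "is_product3 C A B D P p1 p2 p3" "x \<in> hom C T A" "y \<in> hom C T B" "z \<in> hom C T D"
  obtains u where "u \<in> hom C T P" "p1 \<cdot> u = x" "p2 \<cdot> u = y" "p3 \<cdot> u = z"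
  using assms unfolding is_product3_def by blast

lemma product3_of_products:
  assumes Q: "is_product C B D Q q1 q2" and P: "is_product C A Q P p1 p2"
  shows "is_product3 C A B D P p1 (q1 \<cdot> p2) (q2 \<cdot> p2)"
proof -
  note QQ = productD[OF Q] and PP = productD[OF P]
  have tuple: "\<exists>!u. u \<in> hom C T P \<and> p1 \<cdot> u = x \<and> (q1 \<cdot> p2) \<cdot> u = y \<and> (q2 \<cdot> p2) \<cdot> u = z"
    if xyz: "x \<in> hom C T A" "y \<in> hom C T B" "z \<in> hom C T D" for T x y z
  proof -
    obtain v where v: "v \<in> hom C T Q" "q1 \<cdot> v = y" "q2 \<cdot> v = z"
      using product_pair[OF Q xyz(2,3)] .
    obtain u where u: "u \<in> hom C T P" "p1 \<cdot> u = x" "p2 \<cdot> u = v"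
      using product_pair[OF P xyz(1) v(1)] .
    show ?thesis
    proof (rule ex1I[of _ u])
      fix u'
      assume u': "u' \<in> hom C T P \<and> p1 \<cdot> u' = x \<and> q1 \<cdot> p2 \<cdot> u' = y \<and> q2 \<cdot> p2 \<cdot> u' = z"
      have "p2 \<cdot> u' = v"
        by (rule product_ext[OF Q]) (use PP QQ u' v in simp_all)
      show "u' = u"
        by (rule product_ext[OF P]) (use PP u u' \<open>p2 \<cdot> u' = v\<close> in simp_all)
    qed (use PP QQ u v in \<open>simp add: comp_eq_postcomp[OF u(3)]\<close>)
  qed
  have "q1 \<cdot> p2 \<in> hom C P B" "q2 \<cdot> p2 \<in> hom C P D"
    using PP QQ by simp_all
  then show ?thesis
    unfolding is_product3_def
  proof (intro conjI allI impI)
    fix T x y z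
    assume "x \<in> hom C T A \<and> y \<in> hom C T B \<and> z \<in> hom C T D"
    then show "\<exists>!u. u \<in> hom C T P \<and> p1 \<cdot> u = x \<and> q1 \<cdot> p2 \<cdot> u = y \<and> q2 \<cdot> p2 \<cdot> u = z"
      by (elim conjE) (rule tuple)
  qed (use PP QQ in simp_all)
qed

lemma gen_mem2_in_hom:
  assumes "is_product C A A P p1 p2" "m \<in> hom C M P" "gen_mem2 C p1 p2 m x y"
  shows "x \<in> hom C (Dom C x) A" "y \<in> hom C (Dom C x) A"
proof -
  note PP = productD[OF assms(1)]
  obtain u where "u \<in> hom C (Dom C x) M" "p1 \<cdot> m \<cdot> u = x" "p2 \<cdot> m \<cdot> u = y"
    using assms(2,3) unfolding gen_mem2_def by force
  then show "x \<in> hom C (Dom C x) A" "y \<in> hom C (Dom C x) A"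
    using PP assms(2) by (metis arr_comp cod_comp dom_comp in_hom)+
qed

lemma gen_mem2_refl:
  assumes pr: "is_product C A A P p1 p2" and m: "m \<in> hom C M P" "reflexive_rel C A P p1 p2 m"
    and x: "x \<in> hom C T A"
  shows "gen_mem2 C p1 p2 m x x"
proof -
  note PP = productD[OF pr]
  obtain \<delta> where \<delta>: "\<delta> \<in> hom C A P" "p1 \<cdot> \<delta> = Id C A" "p2 \<cdot> \<delta> = Id C A"
    using product_pair[OF pr id_in_hom[OF PP(3)] id_in_hom[OF PP(3)]] .
  then obtain u where u: "u \<in> hom C A M" "m \<cdot> u = \<delta>"
    using m unfolding reflexive_rel_def by auto
  have "p1 \<cdot> m \<cdot> u = Id C A" "p2 \<cdot> m \<cdot> u = Id C A"
    using PP m(1) u \<delta> by (simp_all add: comp_eq_postcomp[OF u(2)])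
  then show ?thesis
    unfolding gen_mem2_def using PP m(1) u(1) x by (intro exI[of _ "u \<cdot> x"]) simp
qed

lemma gen_mem2_meet:
  assumes pr: "is_product C A A P p1 p2" and pb: "is_pullback C r s a b" and r: "r \<in> hom C (Dom C r) P"
    and rxy: "gen_mem2 C p1 p2 r x y" and sxy: "gen_mem2 C p1 p2 s x y"
  shows "gen_mem2 C p1 p2 (r \<cdot> a) x y"
proof -
  note PB = pullbackD[OF pb] and PP = productD[OF pr]
  obtain u where u: "u \<in> hom C (Dom C x) (Dom C r)" "p1 \<cdot> r \<cdot> u = x" "p2 \<cdot> r \<cdot> u = y"
    using rxy unfolding gen_mem2_def by blast
  obtain v where v: "v \<in> hom C (Dom C x) (Dom C s)" "p1 \<cdot> s \<cdot> v = x" "p2 \<cdot> s \<cdot> v = y"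
    using sxy unfolding gen_mem2_def by blast
  have "r \<cdot> u = s \<cdot> v"
    by (rule product_ext[OF pr]) (use PP r PB u v in simp_all)
  then obtain k where k: "k \<in> hom C (Dom C x) (Dom C a)" "a \<cdot> k = u"
    using pullback_lift[OF pb u(1) v(1)] by blast
  show ?thesis
    unfolding gen_mem2_def using PP r PB(1-5) k u by (intro exI[of _ k]) (simp add: comp_eq_postcomp[OF k(2)])
qed

lemma factors_through_product_map_iff:
  assumes P: "is_product C A A P p1 p2" and Q: "is_product C B B Q q1 q2"
    and f: "f \<in> hom C A B" and F: "F \<in> hom C P Q" "q1 \<cdot> F = f \<cdot> p1" "q2 \<cdot> F = f \<cdot> p2"
    and m: "m \<in> hom C M P" and z: "z \<in> hom C T Q"
  shows "factors_through C z (F \<cdot> m) \<longleftrightarrow>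
    (\<exists>x y. gen_mem2 C p1 p2 m x y \<and> f \<cdot> x = q1 \<cdot> z \<and> f \<cdot> y = q2 \<cdot> z)"
proof
  note PP = productD[OF P] and QQ = productD[OF Q]
  assume "factors_through C z (F \<cdot> m)"
  then obtain u where u: "u \<in> hom C T M" "F \<cdot> m \<cdot> u = z"
    using F m z unfolding factors_through_def by auto
  have "gen_mem2 C p1 p2 m (p1 \<cdot> m \<cdot> u) (p2 \<cdot> m \<cdot> u)"
    unfolding gen_mem2_def using PP m u(1) by auto
  moreover have "f \<cdot> (p1 \<cdot> m \<cdot> u) = q1 \<cdot> z" "f \<cdot> (p2 \<cdot> m \<cdot> u) = q2 \<cdot> z"
    using PP QQ f F(1) m u(1) by (simp_all add: F(2,3)[symmetric] u(2)[symmetric])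
  ultimately show "\<exists>x y. gen_mem2 C p1 p2 m x y \<and> f \<cdot> x = q1 \<cdot> z \<and> f \<cdot> y = q2 \<cdot> z"
    by blast
next
  note PP = productD[OF P] and QQ = productD[OF Q]
  assume "\<exists>x y. gen_mem2 C p1 p2 m x y \<and> f \<cdot> x = q1 \<cdot> z \<and> f \<cdot> y = q2 \<cdot> z"
  then obtain x y where mem: "gen_mem2 C p1 p2 m x y" and fx: "f \<cdot> x = q1 \<cdot> z" and fy: "f \<cdot> y = q2 \<cdot> z"
    by blast
  then obtain u where u: "u \<in> hom C (Dom C x) M" "p1 \<cdot> m \<cdot> u = x" "p2 \<cdot> m \<cdot> u = y"
    using m unfolding gen_mem2_def by auto
  have "Dom C x = T"
    using arg_cong[OF fx, of "Dom C"] gen_mem2_in_hom[OF P m mem] QQ f z by simp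
  have "f \<cdot> p1 \<cdot> m \<cdot> u = q1 \<cdot> z" "f \<cdot> p2 \<cdot> m \<cdot> u = q2 \<cdot> z"
    using PP f m u fx fy by (simp_all del: comp_assoc add: comp_assoc[symmetric])
  then have "q1 \<cdot> F \<cdot> m \<cdot> u = q1 \<cdot> z" "q2 \<cdot> F \<cdot> m \<cdot> u = q2 \<cdot> z"
    using F(2,3) by simp_all
  then have "F \<cdot> m \<cdot> u = z"
    using PP QQ F(1) m u(1) z \<open>Dom C x = T\<close> by (intro product_ext[OF Q, where u = "F \<cdot> m \<cdot> u"]) simp_all
  then show "factors_through C z (F \<cdot> m)"
    unfolding factors_through_def using u(1) m F z \<open>Dom C x = T\<close> by auto
qed

end

section \<open>Regular categories\<close>

(* P holds after pulling back along a regular epi onto T; this interprets existential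
   statements about generalized elements of T. *)
definition locally :: "('o, 'a) category \<Rightarrow> 'o \<Rightarrow> ('a \<Rightarrow> bool) \<Rightarrow> bool" where
  "locally C T P \<longleftrightarrow> (\<exists>t. regular_epi C t \<and> Cod C t = T \<and> P t)"

locale regular_cat = cat +
  assumes regular: "regular_category C"
begin

lemma pullback_exists:
  assumes "f \<in> Arr C" "g \<in> Arr C" "Cod C f = Cod C g"
  obtains p q where "is_pullback C f g p q"
  using assms regular unfolding regular_category_def has_finite_limits_def by blast

lemma regular_epi_lift:
  assumes e: "regular_epi C e" and w: "w \<in> hom C T (Cod C e)"
  obtains t k where "regular_epi C t" "t \<in> hom C (Dom C t) T" "k \<in> hom C (Dom C t) (Dom C e)" "e \<cdot> k = w \<cdot> t"
proof -
  have "e \<in> Arr C"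
    using e by (rule regular_epi_arr)
  then obtain p q where pb: "is_pullback C e w p q"
    using w pullback_exists[of e w] by auto
  note P = pullbackD[OF pb]
  have "regular_epi C q"
    using regular pb e unfolding regular_category_def regular_epis_pullback_stable_def by blast
  then show ?thesis
    using that[of q p] P w by simp
qed

lemma regular_epi_mono_diagonal:
  assumes t: "regular_epi C t" and n: "mono C n" and h: "h \<in> hom C (Cod C t) (Cod C n)"
    and ht: "factors_through C (h \<cdot> t) n"
  shows "factors_through C h n"
proof -
  obtain a b where co: "is_coequalizer C a b t"
    using t unfolding regular_epi_def by blast
  note ab = coequalizerD[OF co]
  have n_arr: "n \<in> Arr C"
    using n unfolding mono_def by blast
  obtain v where v: "v \<in> hom C (Cod C a) (Dom C n)" "n \<cdot> v = h \<cdot> t"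
    using ht ab h unfolding factors_through_def by auto
  have "n \<cdot> v \<cdot> a = n \<cdot> v \<cdot> b"
    using ab h v by (simp add: comp_eq_postcomp[OF ab(4)])
  have "v \<cdot> a = v \<cdot> b"
    by (rule mono_cancel[OF n]) (use ab n_arr v \<open>n \<cdot> v \<cdot> a = n \<cdot> v \<cdot> b\<close> in simp_all)
  then obtain w where w: "w \<in> hom C (Cod C t) (Dom C n)" "w \<cdot> t = v"
    using coequalizer_univ[OF co v(1)] by blast
  have "n \<cdot> w = h"
    by (rule regular_epi_cancel[OF t]) (use ab n_arr v w h in \<open>simp_all add: comp_eq_postcomp[OF w(2)]\<close>)
  then show ?thesis
    unfolding factors_through_def using w h by auto
qed

lemma factors_through_of_locally:
  assumes n: "mono C n" and h: "h \<in> hom C T (Cod C n)"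
    and loc: "locally C T (\<lambda>t. factors_through C (h \<cdot> t) n)"
  shows "factors_through C h n"
proof -
  obtain t where "regular_epi C t" "Cod C t = T" "factors_through C (h \<cdot> t) n"
    using loc unfolding locally_def by blast
  then show ?thesis
    using regular_epi_mono_diagonal[OF _ n] h by simp
qed

lemma locally_mono:
  "locally C T P \<Longrightarrow> (\<And>t. regular_epi C t \<Longrightarrow> Cod C t = T \<Longrightarrow> P t \<Longrightarrow> Q t) \<Longrightarrow> locally C T Q"
  unfolding locally_def by blast

lemma kernel_pair_coequalizer_eq:
  assumes pb: "is_pullback C g g p q" and co: "is_coequalizer C p q e"
    and "x \<in> hom C T (Dom C g)" "y \<in> hom C T (Dom C g)" "g \<cdot> x = g \<cdot> y"
  shows "e \<cdot> x = e \<cdot> y"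
proof -
  note P = pullbackD[OF pb] and E = coequalizerD[OF co]
  obtain k where k: "k \<in> hom C T (Dom C p)" "p \<cdot> k = x" "q \<cdot> k = y"
    using pullback_lift[OF pb assms(3-5)] .
  show ?thesis
    using P E k(1) by (simp add: k(2)[symmetric] k(3)[symmetric])
qed

lemma image_exists:
  assumes g: "g \<in> Arr C"
  obtains m where "is_image C g m"
proof -
  obtain p q where pb: "is_pullback C g g p q"
    using pullback_exists[OF g g] by blast
  then obtain e where co: "is_coequalizer C p q e"
    using regular unfolding regular_category_def has_coequalizers_of_kernel_pairs_def by blast
  note P = pullbackD[OF pb] and E = coequalizerD[OF co]
  have e: "regular_epi C e"
    unfolding regular_epi_def using co by blast
  obtain m where m: "m \<in> hom C (Cod C e) (Cod C g)" "m \<cdot> e = g"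
    using coequalizer_univ[OF co, of g "Cod C g"] P g by auto
  have "mono C m"
  proof (rule monoI)
    fix T x y
    assume x: "x \<in> hom C T (Dom C m)" and y: "y \<in> hom C T (Dom C m)" and xy: "m \<cdot> x = m \<cdot> y"
    obtain t1 k1 where t1: "regular_epi C t1" "t1 \<in> hom C (Dom C t1) T"
      and k1: "k1 \<in> hom C (Dom C t1) (Dom C e)" "e \<cdot> k1 = x \<cdot> t1"
      using regular_epi_lift[OF e, of x T] x m by auto
    obtain t2 k2 where t2: "regular_epi C t2" "t2 \<in> hom C (Dom C t2) (Dom C t1)"
      and k2: "k2 \<in> hom C (Dom C t2) (Dom C e)" "e \<cdot> k2 = y \<cdot> t1 \<cdot> t2"
      using regular_epi_lift[OF e, of "y \<cdot> t1" "Dom C t1"] y m t1 by auto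
    have "m \<cdot> e \<cdot> k1 \<cdot> t2 = m \<cdot> e \<cdot> k2"
      using E m(1) x y t1 t2 k1 k2 xy
      by (simp add: comp_eq_postcomp[OF k1(2)] comp_eq_postcomp[OF k2(2)])
    then have "g \<cdot> k1 \<cdot> t2 = g \<cdot> k2"
      using m(2) by simp
    then have "e \<cdot> k1 \<cdot> t2 = e \<cdot> k2"
      using kernel_pair_coequalizer_eq[OF pb co, of "k1 \<cdot> t2" "Dom C t2" k2] P E k1 k2 t2
      by simp
    then have "x \<cdot> t1 \<cdot> t2 = y \<cdot> t1 \<cdot> t2"
      using k1 k2 by simp
    then have "x \<cdot> t1 = y \<cdot> t1"
      using x y t1 t2 by (intro regular_epi_cancel[OF t2(1), where g = "x \<cdot> t1"]) simp_all
    then show "x = y"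
      using x y t1 by (intro regular_epi_cancel[OF t1(1), where g = x]) simp_all
  qed (use m(1) in simp)
  then have "is_image C g m"
    unfolding is_image_def using e E m P by (intro conjI exI[of _ e]) simp_all
  then show ?thesis
    by (rule that)
qed

lemma regular_epi_comp_iso:
  assumes q: "regular_epi C q" and m: "m \<in> hom C (Cod C q) Z" and d: "d \<in> hom C Z (Cod C q)"
    and md: "m \<cdot> d = Id C Z" and dm: "d \<cdot> m = Id C (Cod C q)"
  shows "regular_epi C (m \<cdot> q)"
proof -
  obtain a b where co: "is_coequalizer C a b q"
    using q unfolding regular_epi_def by blast
  note E = coequalizerD[OF co]
  have univ: "\<exists>!u. u \<in> hom C (Cod C (m \<cdot> q)) (Cod C h) \<and> u \<cdot> (m \<cdot> q) = h"
    if h: "h \<in> Arr C" "Dom C h = Cod C a" "h \<cdot> a = h \<cdot> b" for h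
  proof -
    obtain u0 where u0: "u0 \<in> hom C (Cod C q) (Cod C h)" "u0 \<cdot> q = h"
      using coequalizer_univ[OF co, of h "Cod C h"] h by auto
    show ?thesis
    proof (rule ex1I[of _ "u0 \<cdot> d"])
      show "u0 \<cdot> d \<in> hom C (Cod C (m \<cdot> q)) (Cod C h) \<and> u0 \<cdot> d \<cdot> (m \<cdot> q) = h"
        using E m d u0 by (simp add: comp_eq_postcomp[OF dm])
    next
      fix u
      assume u: "u \<in> hom C (Cod C (m \<cdot> q)) (Cod C h) \<and> u \<cdot> (m \<cdot> q) = h"
      then have uh: "u \<in> hom C Z (Cod C h)"
        using E m by simp
      then have "u \<cdot> m \<cdot> q = h"
        using E m u by simp
      then have "u \<cdot> m = u0"
        using E m uh u0 by (intro regular_epi_cancel[OF q, where g = "u \<cdot> m"]) simp_all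
      show "u = u0 \<cdot> d"
        using E m d uh by (simp add: \<open>u \<cdot> m = u0\<close>[symmetric] comp_eq_postcomp[OF md])
    qed
  qed
  have "is_coequalizer C a b (m \<cdot> q)"
    unfolding is_coequalizer_def using E m univ by (simp add: comp_eq_postcomp[OF E(4)])
  then show ?thesis
    unfolding regular_epi_def by blast
qed

lemma regular_epi_comp:
  assumes f: "regular_epi C f" and g: "regular_epi C g" and fg: "Cod C f = Dom C g"
  shows "regular_epi C (g \<cdot> f)"
proof -
  have fa: "f \<in> Arr C" and ga: "g \<in> Arr C"
    using f g by (simp_all add: regular_epi_arr)
  obtain m where "is_image C (g \<cdot> f) m"
    using image_exists[of "g \<cdot> f"] fa ga fg by auto
  then obtain e where m: "mono C m" and e: "regular_epi C e" "Dom C e = Dom C f" "Cod C e = Dom C m"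
    and me: "m \<cdot> e = g \<cdot> f"
    unfolding is_image_def using fa ga fg by auto
  have ma: "m \<in> Arr C"
    using m unfolding mono_def by blast
  have ea: "e \<in> Arr C"
    using e(1) by (rule regular_epi_arr)
  have cod_m: "Cod C m = Cod C g"
    using arg_cong[OF me, of "Cod C"] ma ea fa ga fg e by simp
  have "factors_through C (g \<cdot> f) m"
    unfolding factors_through_def using ea e fa ga fg me by (intro exI[of _ e]) simp
  then have "factors_through C g m"
    using regular_epi_mono_diagonal[OF f m] ga fg cod_m by simp
  then obtain d1 where d1: "d1 \<in> hom C (Cod C f) (Dom C m)" "m \<cdot> d1 = g"
    unfolding factors_through_def using ga fg by auto
  have idg: "Id C (Cod C g) \<in> hom C (Cod C g) (Cod C g)"
    using ga by (rule id_cod_in_hom)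
  have "factors_through C (Id C (Cod C g) \<cdot> g) m"
    unfolding factors_through_def using ga d1 fg by (intro exI[of _ d1]) simp
  then have "factors_through C (Id C (Cod C g)) m"
    using regular_epi_mono_diagonal[OF g m] idg ga cod_m by simp
  then obtain d where d: "d \<in> hom C (Cod C g) (Dom C m)" "m \<cdot> d = Id C (Cod C g)"
    unfolding factors_through_def using idg by auto
  have "d \<cdot> m = Id C (Dom C m)"
    by (rule mono_cancel[OF m]) (use ma d cod_m id_dom_in_hom[OF ma] in \<open>simp_all add: comp_eq_postcomp[OF d(2)]\<close>)
  then have "regular_epi C (m \<cdot> e)"
    using regular_epi_comp_iso[OF e(1), of m "Cod C g" d] ma d e cod_m by simp
  then show ?thesis
    using me by simp
qed

lemma locally_bind:
  assumes "locally C T P"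
    and "\<And>t. regular_epi C t \<Longrightarrow> Cod C t = T \<Longrightarrow> P t \<Longrightarrow> locally C (Dom C t) (\<lambda>s. Q (t \<cdot> s))"
  shows "locally C T Q"
proof -
  obtain t where t: "regular_epi C t" "Cod C t = T" "P t"
    using assms(1) unfolding locally_def by blast
  then obtain s where s: "regular_epi C s" "Cod C s = Dom C t" "Q (t \<cdot> s)"
    using assms(2) unfolding locally_def by blast
  have "regular_epi C (t \<cdot> s)"
    using regular_epi_comp[OF s(1) t(1) s(2)] .
  moreover have "Cod C (t \<cdot> s) = T"
    using t s regular_epi_arr by simp
  ultimately show ?thesis
    unfolding locally_def using s(3) by blast
qed

lemma imageD:
  assumes "is_image C g m"
  obtains e where "mono C m" "m \<in> Arr C" "regular_epi C e" "e \<in> hom C (Dom C g) (Dom C m)" "m \<cdot> e = g"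
    "g \<in> hom C (Dom C g) (Cod C m)"
proof -
  obtain e where e: "mono C m" "regular_epi C e" "Dom C e = Dom C g" "Cod C e = Dom C m" "m \<cdot> e = g"
    using assms unfolding is_image_def by blast
  moreover have "m \<in> Arr C"
    using e(1) unfolding mono_def by blast
  moreover have "e \<in> Arr C"
    using e(2) by (rule regular_epi_arr)
  moreover have "m \<cdot> e \<in> hom C (Dom C e) (Cod C m)"
    using e(2,4) calculation(6,7) by simp
  ultimately show ?thesis
    using that by simp
qed

lemma image_local_lift:
  assumes im: "is_image C g m" and h: "factors_through C h m"
  shows "locally C (Dom C h) (\<lambda>t. factors_through C (h \<cdot> t) g)"
proof -
  obtain e where m: "m \<in> Arr C" and e: "regular_epi C e" "e \<in> hom C (Dom C g) (Dom C m)" "m \<cdot> e = g"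
    using im by (rule imageD)
  obtain k where k: "k \<in> hom C (Dom C h) (Dom C m)" "m \<cdot> k = h"
    using h unfolding factors_through_def by blast
  obtain t k' where t: "regular_epi C t" "t \<in> hom C (Dom C t) (Dom C h)"
    and k': "k' \<in> hom C (Dom C t) (Dom C e)" "e \<cdot> k' = k \<cdot> t"
    using regular_epi_lift[OF e(1), of k "Dom C h"] k e by auto
  have "m \<cdot> e \<cdot> k' = m \<cdot> k \<cdot> t"
    using m e(2) k(1) t(2) k'(1) by (simp add: comp_eq_postcomp[OF k'(2)])
  then have "factors_through C (m \<cdot> k \<cdot> t) g"
    unfolding factors_through_def using m e(2) k(1) t(2) k'(1) e(3) by (intro exI[of _ k']) simp
  then have "factors_through C (h \<cdot> t) g"
    using k(2) by simp
  then show ?thesis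
    unfolding locally_def using t by auto
qed

lemma images_local_lift:
  assumes i1: "is_image C g1 m1" and i2: "is_image C g2 m2"
    and h1: "factors_through C h m1" and h2: "factors_through C h m2"
  shows "locally C (Dom C h) (\<lambda>t. factors_through C (h \<cdot> t) g1 \<and> factors_through C (h \<cdot> t) g2)"
proof -
  obtain e1 where m1: "m1 \<in> Arr C" and g1: "g1 \<in> hom C (Dom C g1) (Cod C m1)"
    using i1 by (rule imageD)
  obtain e2 where m2: "m2 \<in> Arr C"
    using i2 by (rule imageD)
  obtain k where "h \<in> hom C (Dom C h) (Cod C m1)"
    using h1 m1 by (rule factors_throughE)
  then have h: "h \<in> Arr C"
    by simp
  show ?thesis
    using image_local_lift[OF i1 h1]
  proof (rule locally_bind)
    fix t
    assume t: "regular_epi C t" "Cod C t = Dom C h" and ht: "factors_through C (h \<cdot> t) g1"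
    have t_arr: "t \<in> Arr C"
      using t(1) by (rule regular_epi_arr)
    have "factors_through C (h \<cdot> t) m2"
      using factors_through_comp[OF h2 m2, of t "Dom C t"] t(2) t_arr by simp
    then have "locally C (Dom C t) (\<lambda>t'. factors_through C (h \<cdot> t \<cdot> t') g2)"
      using image_local_lift[OF i2] h t(2) t_arr by fastforce
    then show "locally C (Dom C t) (\<lambda>t'. factors_through C (h \<cdot> (t \<cdot> t')) g1
        \<and> factors_through C (h \<cdot> (t \<cdot> t')) g2)"
    proof (rule locally_mono)
      fix t'
      assume t': "regular_epi C t'" "Cod C t' = Dom C t" and ht': "factors_through C (h \<cdot> t \<cdot> t') g2"
      have "factors_through C (h \<cdot> t \<cdot> t') g1"
        using factors_through_comp[OF ht _, of t' "Dom C t'"] g1 h t(2) t_arr t'(2) regular_epi_arr[OF t'(1)]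
        by simp
      then show "factors_through C (h \<cdot> (t \<cdot> t')) g1 \<and> factors_through C (h \<cdot> (t \<cdot> t')) g2"
        using ht' h t(2) t_arr t'(2) regular_epi_arr[OF t'(1)] by simp
    qed
  qed
qed

lemma factors_through_image:
  assumes im: "is_image C g m" and h: "h \<in> hom C T (Cod C m)"
    and loc: "locally C T (\<lambda>t. factors_through C (h \<cdot> t) g)"
  shows "factors_through C h m"
proof -
  obtain e where m: "mono C m" "m \<in> Arr C" and e: "regular_epi C e" "e \<in> hom C (Dom C g) (Dom C m)" "m \<cdot> e = g"
    and g: "g \<in> hom C (Dom C g) (Cod C m)"
    using im by (rule imageD)
  have lift: "factors_through C (h \<cdot> t) m" if ht: "factors_through C (h \<cdot> t) g" for t
  proof -
    obtain k where k: "k \<in> hom C (Dom C (h \<cdot> t)) (Dom C g)" "g \<cdot> k = h \<cdot> t"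
      using ht unfolding factors_through_def by blast
    have "m \<cdot> e \<cdot> k = h \<cdot> t"
      using e(3) k(2) by simp
    then show ?thesis
      unfolding factors_through_def using m e(2) k(1) by (intro exI[of _ "e \<cdot> k"]) simp
  qed
  have "locally C T (\<lambda>t. factors_through C (h \<cdot> t) m)"
    using loc lift by (rule locally_mono)
  then show ?thesis
    by (rule factors_through_of_locally[OF m(1) h])
qed

lemma image_least:
  assumes im: "is_image C g m" and n: "mono C n" "Cod C n = Cod C g" and g: "factors_through C g n"
  shows "factors_through C m n"
proof -
  obtain e where m: "mono C m" "m \<in> Arr C" and e: "regular_epi C e" "e \<in> hom C (Dom C g) (Dom C m)" "m \<cdot> e = g"
    and "g \<in> hom C (Dom C g) (Cod C m)"
    using im by (rule imageD)
  then have "m \<in> hom C (Cod C e) (Cod C n)"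
    using n(2) by simp
  then show ?thesis
    using regular_epi_mono_diagonal[OF e(1) n(1), of m] e(3) g by simp
qed

lemma mono_comp_pullback:
  assumes pb: "is_pullback C m n c d" and m: "mono C m" and n: "mono C n"
  shows "mono C (m \<cdot> c)"
proof -
  note PB = pullbackD[OF pb]
  show ?thesis
  proof (rule monoI)
    fix T x y
    assume x: "x \<in> hom C T (Dom C (m \<cdot> c))" and y: "y \<in> hom C T (Dom C (m \<cdot> c))"
      and xy: "m \<cdot> c \<cdot> x = m \<cdot> c \<cdot> y"
    have x': "x \<in> hom C T (Dom C c)" and y': "y \<in> hom C T (Dom C c)"
      using PB x y by simp_all
    have cxy: "c \<cdot> x = c \<cdot> y"
      by (rule mono_cancel[OF m]) (use PB x' y' xy in simp_all)
    have "n \<cdot> d \<cdot> x = n \<cdot> d \<cdot> y"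
      using xy PB(6) by simp
    then have "d \<cdot> x = d \<cdot> y"
      using PB x' y' by (intro mono_cancel[OF n, where g = "d \<cdot> x"]) simp_all
    then show "x = y"
      using pullback_ext[OF pb x' y' cxy] by simp
  qed (use PB in simp)
qed

lemma image_meet_le:
  assumes pb: "is_pullback C r s a b" and g: "g \<in> hom C (Cod C r) Q"
    and iRS: "is_image C (g \<cdot> (r \<cdot> a)) mRS" and iR: "is_image C (g \<cdot> r) mR" and iS: "is_image C (g \<cdot> s) mS"
    and pbm: "is_pullback C mR mS c d"
  shows "factors_through C mRS (mR \<cdot> c)"
proof -
  note PB = pullbackD[OF pb] and PBm = pullbackD[OF pbm]
  have gr: "g \<cdot> r \<in> hom C (Dom C r) Q" and gs: "g \<cdot> s \<in> hom C (Dom C s) Q"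
    using PB g by simp_all
  obtain eR where mR: "mono C mR" "mR \<in> Arr C" and eR: "eR \<in> hom C (Dom C r) (Dom C mR)" "mR \<cdot> eR = g \<cdot> r"
    and cR: "g \<cdot> r \<in> hom C (Dom C r) (Cod C mR)"
    using iR gr by (elim imageD) simp_all
  obtain eS where mS: "mono C mS" "mS \<in> Arr C" and eS: "eS \<in> hom C (Dom C s) (Dom C mS)" "mS \<cdot> eS = g \<cdot> s"
    using iS gs by (elim imageD) simp_all
  have eRa: "eR \<cdot> a \<in> hom C (Dom C a) (Dom C mR)" and eSb: "eS \<cdot> b \<in> hom C (Dom C a) (Dom C mS)"
    using PB eR eS by simp_all
  have "mR \<cdot> (eR \<cdot> a) = mS \<cdot> (eS \<cdot> b)"
    using PB mR(2) mS(2) g eR eS by (simp add: comp_eq_postcomp[OF PB(6)])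
  then obtain w where w: "w \<in> hom C (Dom C a) (Dom C c)" "c \<cdot> w = eR \<cdot> a" "d \<cdot> w = eS \<cdot> b"
    using pullback_lift[OF pbm eRa eSb] by blast
  have "mR \<cdot> c \<cdot> w = g \<cdot> (r \<cdot> a)"
    using PB(1-5) PBm(1-5) mR(2) g eR w by (simp add: comp_eq_postcomp[OF w(2)])
  then have "factors_through C (g \<cdot> (r \<cdot> a)) (mR \<cdot> c)"
    unfolding factors_through_def using PB PBm g w(1) by (intro exI[of _ w]) simp
  moreover have "Cod C (mR \<cdot> c) = Cod C (g \<cdot> (r \<cdot> a))"
    using PB PBm g cR by simp
  ultimately show ?thesis
    using image_least[OF iRS mono_comp_pullback[OF pbm mR(1) mS(1)]] by simp
qed

end

section \<open>Majority categories\<close>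

definition pullback_mem3 ::
  "('o, 'a) category \<Rightarrow> 'a \<Rightarrow> 'a \<Rightarrow> 'a \<Rightarrow> 'a \<Rightarrow> 'a \<Rightarrow> 'a \<Rightarrow> 'a \<Rightarrow> 'a \<Rightarrow> bool" where
  "pullback_mem3 C \<alpha> \<beta> F G H x y z \<longleftrightarrow>
     (\<exists>k l. k \<in> hom C (Dom C x) (Dom C \<alpha>) \<and> l \<in> hom C (Dom C x) (Dom C \<beta>) \<and>
        Comp C \<alpha> k = Comp C \<beta> l \<and> Comp C F k = x \<and> Comp C G l = y \<and> Comp C H k = z)"

locale regular_majority_cat = regular_cat +
  assumes majority: "majority_category C"
begin

lemma product_exists:
  assumes "A \<in> Obj C" "B \<in> Obj C"
  obtains P p1 p2 where "is_product C A B P p1 p2"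
  using majority assms unfolding majority_category_def has_binary_products_def by blast

lemma product3_exists:
  assumes "A \<in> Obj C" "B \<in> Obj C" "D \<in> Obj C"
  obtains P p1 p2 p3 where "is_product3 C A B D P p1 p2 p3"
proof -
  obtain Q q1 q2 where Q: "is_product C B D Q q1 q2"
    using product_exists assms(2,3) .
  obtain P p1 p2 where P: "is_product C A Q P p1 p2"
    using product_exists[OF assms(1) productD(5)[OF Q]] .
  show ?thesis
    using that product3_of_products[OF Q P] .
qed

lemma gen_mem3_iff:
  assumes "g \<in> hom C E P" "p1 \<in> hom C P A" "p2 \<in> hom C P B" "p3 \<in> hom C P D"
  shows "gen_mem3 C p1 p2 p3 g x y z \<longleftrightarrow>
    (\<exists>u. u \<in> hom C (Dom C x) E \<and> p1 \<cdot> g \<cdot> u = x \<and> p2 \<cdot> g \<cdot> u = y \<and> p3 \<cdot> g \<cdot> u = z)"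
  unfolding gen_mem3_def using assms by (simp cong: conj_cong)

lemma gen_mem3_in_hom:
  assumes P: "is_product3 C A B D P p1 p2 p3" and g: "g \<in> hom C E P" and mem: "gen_mem3 C p1 p2 p3 g x y z"
  shows "x \<in> hom C (Dom C x) A" "y \<in> hom C (Dom C x) B" "z \<in> hom C (Dom C x) D"
proof -
  note PP = product3D[OF P]
  obtain u where u: "u \<in> hom C (Dom C x) E" "p1 \<cdot> g \<cdot> u = x" "p2 \<cdot> g \<cdot> u = y" "p3 \<cdot> g \<cdot> u = z"
    using gen_mem3_iff[OF g PP, THEN iffD1, OF mem] by blast
  have "p1 \<cdot> g \<cdot> u \<in> hom C (Dom C x) A" "p2 \<cdot> g \<cdot> u \<in> hom C (Dom C x) B" "p3 \<cdot> g \<cdot> u \<in> hom C (Dom C x) D"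
    using PP g u(1) by simp_all
  then show "x \<in> hom C (Dom C x) A" "y \<in> hom C (Dom C x) B" "z \<in> hom C (Dom C x) D"
    using u(2-4) by simp_all
qed

lemma majority_locally:
  assumes P: "is_product3 C A B D P p1 p2 p3" and g: "g \<in> hom C E P"
    and xyz': "gen_mem3 C p1 p2 p3 g x y z'" and xy'z: "gen_mem3 C p1 p2 p3 g x y' z"
    and x'yz: "gen_mem3 C p1 p2 p3 g x' y z"
  shows "locally C (Dom C x) (\<lambda>t. gen_mem3 C p1 p2 p3 g (x \<cdot> t) (y \<cdot> t) (z \<cdot> t))"
proof -
  note PP = product3D[OF P]
  obtain m where "is_image C g m"
    using image_exists g by auto
  then obtain e where m: "mono C m" "m \<in> Arr C" and e: "regular_epi C e" "e \<in> hom C E (Dom C m)" "m \<cdot> e = g"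
    and gm: "g \<in> hom C E (Cod C m)"
    using g by (elim imageD) simp_all
  have "majority_selecting C A B D p1 p2 p3 m"
    using majority P m(1) g gm unfolding majority_category_def by auto
  have mh: "m \<in> hom C (Dom C m) P"
    using m(2) gm g by simp
  have to_image: "gen_mem3 C p1 p2 p3 m a b c" if mem: "gen_mem3 C p1 p2 p3 g a b c" for a b c
  proof -
    obtain u where u: "u \<in> hom C (Dom C a) E" "p1 \<cdot> g \<cdot> u = a" "p2 \<cdot> g \<cdot> u = b" "p3 \<cdot> g \<cdot> u = c"
      using gen_mem3_iff[OF g PP, THEN iffD1, OF mem] by blast
    show ?thesis
      unfolding gen_mem3_iff[OF mh PP] using PP mh e(2) u
      by (intro exI[of _ "e \<cdot> u"]) (simp add: comp_eq_postcomp[OF e(3)])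
  qed
  note h1 = gen_mem3_in_hom[OF P g xyz'] and h2 = gen_mem3_in_hom[OF P g xy'z]
    and h3 = gen_mem3_in_hom[OF P g x'yz]
  have "gen_mem3 C p1 p2 p3 m x y z"
    using \<open>majority_selecting C A B D p1 p2 p3 m\<close> h1 h2 h3
      to_image[OF xyz'] to_image[OF xy'z] to_image[OF x'yz]
    unfolding majority_selecting_def by (elim allE[of _ "Dom C x"] allE[of _ x] allE[of _ x'] allE[of _ y] allE[of _ y']
        allE[of _ z] allE[of _ z']) simp
  then obtain u where u: "u \<in> hom C (Dom C x) (Dom C m)" "p1 \<cdot> m \<cdot> u = x" "p2 \<cdot> m \<cdot> u = y" "p3 \<cdot> m \<cdot> u = z"
    using gen_mem3_iff[OF mh PP] by blast
  obtain t k where t: "regular_epi C t" "t \<in> hom C (Dom C t) (Dom C x)"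
    and k: "k \<in> hom C (Dom C t) E" "e \<cdot> k = u \<cdot> t"
    using regular_epi_lift[OF e(1), of u "Dom C x"] u e(2) by auto
  have "p1 \<cdot> m \<cdot> e \<cdot> k = x \<cdot> t" "p2 \<cdot> m \<cdot> e \<cdot> k = y \<cdot> t" "p3 \<cdot> m \<cdot> e \<cdot> k = z \<cdot> t"
    using PP mh e(2) u t k(1) by (simp_all add: comp_eq_postcomp[OF k(2)])
  then have "gen_mem3 C p1 p2 p3 g (x \<cdot> t) (y \<cdot> t) (z \<cdot> t)"
    unfolding gen_mem3_iff[OF g PP] using PP h1 mh e(2) u(1) t k(1)
    by (intro exI[of _ k]) (simp add: comp_eq_postcomp[OF e(3)])
  then show ?thesis
    unfolding locally_def using t by auto
qed

lemma pullback_mem3_majority: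
  assumes \<alpha>: "\<alpha> \<in> hom C M Z" and \<beta>: "\<beta> \<in> hom C N Z"
    and F: "F \<in> hom C M A" and G: "G \<in> hom C N B" and H: "H \<in> hom C M D"
    and xyz': "pullback_mem3 C \<alpha> \<beta> F G H x y z'" and xy'z: "pullback_mem3 C \<alpha> \<beta> F G H x y' z"
    and x'yz: "pullback_mem3 C \<alpha> \<beta> F G H x' y z"
  shows "locally C (Dom C x) (\<lambda>t. pullback_mem3 C \<alpha> \<beta> F G H (x \<cdot> t) (y \<cdot> t) (z \<cdot> t))"
proof -
  obtain p q where pb: "is_pullback C \<alpha> \<beta> p q"
    using pullback_exists[of \<alpha> \<beta>] \<alpha> \<beta> by auto
  note PB = pullbackD[OF pb]
  have "A \<in> Obj C" "B \<in> Obj C" "D \<in> Obj C"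
    using cod_in_obj[of F] cod_in_obj[of G] cod_in_obj[of H] F G H by simp_all
  then obtain P3 p1 p2 p3 where P3: "is_product3 C A B D P3 p1 p2 p3"
    by (rule product3_exists)
  note PP = product3D[OF P3]
  obtain g where g: "g \<in> hom C (Dom C p) P3" "p1 \<cdot> g = F \<cdot> p" "p2 \<cdot> g = G \<cdot> q" "p3 \<cdot> g = H \<cdot> p"
    using product3_tuple[OF P3, of "F \<cdot> p" "Dom C p" "G \<cdot> q" "H \<cdot> p"] PB \<alpha> \<beta> F G H by auto
  have iff: "pullback_mem3 C \<alpha> \<beta> F G H a b c \<longleftrightarrow> gen_mem3 C p1 p2 p3 g a b c" for a b c
  proof
    assume "pullback_mem3 C \<alpha> \<beta> F G H a b c"
    then obtain k l where k: "k \<in> hom C (Dom C a) M" "l \<in> hom C (Dom C a) N" "\<alpha> \<cdot> k = \<beta> \<cdot> l"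
      "F \<cdot> k = a" "G \<cdot> l = b" "H \<cdot> k = c"
      unfolding pullback_mem3_def using \<alpha> \<beta> by auto
    obtain w where w: "w \<in> hom C (Dom C a) (Dom C p)" "p \<cdot> w = k" "q \<cdot> w = l"
      using pullback_lift[OF pb, of k "Dom C a" l] k \<alpha> \<beta> by auto
    show "gen_mem3 C p1 p2 p3 g a b c"
      unfolding gen_mem3_iff[OF g(1) PP] using PB PP \<alpha> \<beta> F G H g(1) w(1) k
      by (intro exI[of _ w])
        (simp add: g(2-4) comp_eq_postcomp[OF w(2)] comp_eq_postcomp[OF w(3)])
  next
    assume "gen_mem3 C p1 p2 p3 g a b c"
    then obtain u where u: "u \<in> hom C (Dom C a) (Dom C p)" "p1 \<cdot> g \<cdot> u = a" "p2 \<cdot> g \<cdot> u = b" "p3 \<cdot> g \<cdot> u = c"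
      unfolding gen_mem3_iff[OF g(1) PP] by blast
    then show "pullback_mem3 C \<alpha> \<beta> F G H a b c"
      unfolding pullback_mem3_def using PB \<alpha> \<beta> F G H
      by (intro exI[of _ "p \<cdot> u"] exI[of _ "q \<cdot> u"]) (simp add: g(2-4))
  qed
  show ?thesis
    using majority_locally[OF P3 g(1), of x y z' y' z x'] xyz' xy'z x'yz by (simp add: iff)
qed

end

section \<open>Images of reflexive relations\<close>

locale reflexive_relations = regular_majority_cat +
  fixes X P \<pi>1 \<pi>2 r s
  assumes product: "is_product C X X P \<pi>1 \<pi>2"
    and r: "r \<in> hom C (Dom C r) P" "reflexive_rel C X P \<pi>1 \<pi>2 r"
    and s: "s \<in> hom C (Dom C s) P" "reflexive_rel C X P \<pi>1 \<pi>2 s"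
begin

lemma gen_mem2E:
  assumes "m \<in> hom C (Dom C m) P" "gen_mem2 C \<pi>1 \<pi>2 m x y"
  obtains k where "k \<in> hom C (Dom C x) (Dom C m)" "\<pi>1 \<cdot> m \<cdot> k = x" "\<pi>2 \<cdot> m \<cdot> k = y"
    "x \<in> hom C (Dom C x) X" "y \<in> hom C (Dom C x) X"
  using assms gen_mem2_in_hom[OF product assms] unfolding gen_mem2_def by blast

lemma gen_mem2_shared_source:
  assumes f: "f \<in> hom C X Y"
    and xy: "gen_mem2 C \<pi>1 \<pi>2 r x y" and xy': "gen_mem2 C \<pi>1 \<pi>2 s x' y'"
    and fx: "f \<cdot> x = f \<cdot> x'" and fy: "f \<cdot> y = f \<cdot> y'"
  shows "locally C (Dom C x) (\<lambda>t. \<exists>c d. gen_mem2 C \<pi>1 \<pi>2 s c d \<and> gen_mem2 C \<pi>1 \<pi>2 r c (y \<cdot> t)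
    \<and> f \<cdot> c = f \<cdot> x \<cdot> t \<and> f \<cdot> d = f \<cdot> y \<cdot> t)"
proof -
  note PP = productD[OF product]
  let ?Q = "pullback_mem3 C (\<pi>1 \<cdot> s) (\<pi>1 \<cdot> r) (f \<cdot> \<pi>1 \<cdot> s) (\<pi>2 \<cdot> r) (f \<cdot> \<pi>2 \<cdot> s)"
  have intro: "?Q (f \<cdot> a) w (f \<cdot> b)"
    if sab: "gen_mem2 C \<pi>1 \<pi>2 s a b" and raw: "gen_mem2 C \<pi>1 \<pi>2 r a w" for a b w
  proof -
    obtain k where k: "k \<in> hom C (Dom C a) (Dom C s)" "\<pi>1 \<cdot> s \<cdot> k = a" "\<pi>2 \<cdot> s \<cdot> k = b"
      and a: "a \<in> hom C (Dom C a) X"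
      using gen_mem2E[OF s(1) sab] .
    obtain l where l: "l \<in> hom C (Dom C a) (Dom C r)" "\<pi>1 \<cdot> r \<cdot> l = a" "\<pi>2 \<cdot> r \<cdot> l = w"
      using gen_mem2E[OF r(1) raw] .
    show ?thesis
      unfolding pullback_mem3_def using PP f r(1) s(1) a k l
      by (intro exI[of _ k] exI[of _ l]) (simp del: comp_assoc add: comp_assoc[symmetric])
  qed
  have elim: "\<exists>c d. gen_mem2 C \<pi>1 \<pi>2 s c d \<and> gen_mem2 C \<pi>1 \<pi>2 r c w \<and> f \<cdot> c = a \<and> f \<cdot> d = b"
    if Q: "?Q a w b" for a w b
  proof -
    obtain k l where kl: "k \<in> hom C (Dom C a) (Dom C s)" "l \<in> hom C (Dom C a) (Dom C r)"
      "\<pi>1 \<cdot> s \<cdot> k = \<pi>1 \<cdot> r \<cdot> l" "f \<cdot> \<pi>1 \<cdot> s \<cdot> k = a" "\<pi>2 \<cdot> r \<cdot> l = w" "f \<cdot> \<pi>2 \<cdot> s \<cdot> k = b"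
      using Q PP r(1) s(1) unfolding pullback_mem3_def by auto
    have "gen_mem2 C \<pi>1 \<pi>2 s (\<pi>1 \<cdot> s \<cdot> k) (\<pi>2 \<cdot> s \<cdot> k)" "gen_mem2 C \<pi>1 \<pi>2 r (\<pi>1 \<cdot> s \<cdot> k) w"
      unfolding gen_mem2_def using PP s(1) r(1) kl by auto
    moreover have "f \<cdot> (\<pi>1 \<cdot> s \<cdot> k) = a" "f \<cdot> (\<pi>2 \<cdot> s \<cdot> k) = b"
      using PP f s(1) kl(1,4,6) by simp_all
    ultimately show ?thesis
      by blast
  qed
  note hx = gen_mem2_in_hom[OF product r(1) xy] and hx' = gen_mem2_in_hom[OF product s(1) xy']
  have "Dom C x' = Dom C x"
    using arg_cong[OF fx, of "Dom C"] f hx hx' by simp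
  then have m2: "?Q (f \<cdot> x) x' (f \<cdot> y)"
    using intro[OF xy' gen_mem2_refl[OF product r, of x']] hx' fx fy by simp
  have m1: "?Q (f \<cdot> x) y (f \<cdot> x)"
    using intro[OF gen_mem2_refl[OF product s, of x] xy] hx by simp
  have m3: "?Q (f \<cdot> y) y (f \<cdot> y)"
    using intro[OF gen_mem2_refl[OF product s, of y] gen_mem2_refl[OF product r, of y]] hx by simp
  have "locally C (Dom C (f \<cdot> x)) (\<lambda>t. ?Q (f \<cdot> x \<cdot> t) (y \<cdot> t) (f \<cdot> y \<cdot> t))"
    using pullback_mem3_majority[OF _ _ _ _ _ m1 m2 m3] PP f r(1) s(1) by simp
  then show ?thesis
    using f hx by (simp add: elim locally_mono)
qed

lemma gen_mem2_common_pair: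
  assumes f: "f \<in> hom C X Y"
    and cd: "gen_mem2 C \<pi>1 \<pi>2 s c d" and ce: "gen_mem2 C \<pi>1 \<pi>2 r c e" and fde: "f \<cdot> d = f \<cdot> e"
  shows "locally C (Dom C c) (\<lambda>t. \<exists>v. gen_mem2 C \<pi>1 \<pi>2 r (c \<cdot> t) v \<and> gen_mem2 C \<pi>1 \<pi>2 s (c \<cdot> t) v
    \<and> f \<cdot> v = f \<cdot> d \<cdot> t)"
proof -
  note PP = productD[OF product]
  let ?Q = "pullback_mem3 C (\<pi>2 \<cdot> r) (\<pi>2 \<cdot> s) (\<pi>1 \<cdot> r) (\<pi>1 \<cdot> s) (f \<cdot> \<pi>2 \<cdot> r)"
  have intro: "?Q a a' (f \<cdot> b)"
    if rab: "gen_mem2 C \<pi>1 \<pi>2 r a b" and sab: "gen_mem2 C \<pi>1 \<pi>2 s a' b" for a a' b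
  proof -
    obtain k where k: "k \<in> hom C (Dom C a) (Dom C r)" "\<pi>1 \<cdot> r \<cdot> k = a" "\<pi>2 \<cdot> r \<cdot> k = b"
      and a: "a \<in> hom C (Dom C a) X" "b \<in> hom C (Dom C a) X"
      using gen_mem2E[OF r(1) rab] .
    obtain l where l: "l \<in> hom C (Dom C a') (Dom C s)" "\<pi>1 \<cdot> s \<cdot> l = a'" "\<pi>2 \<cdot> s \<cdot> l = b"
      and a': "a' \<in> hom C (Dom C a') X" "b \<in> hom C (Dom C a') X"
      using gen_mem2E[OF s(1) sab] .
    show ?thesis
      unfolding pullback_mem3_def using PP f r(1) s(1) a a' k l
      by (intro exI[of _ k] exI[of _ l]) (simp del: comp_assoc add: comp_assoc[symmetric])
  qed
  have elim: "\<exists>v. gen_mem2 C \<pi>1 \<pi>2 r a v \<and> gen_mem2 C \<pi>1 \<pi>2 s a' v \<and> f \<cdot> v = b"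
    if Q: "?Q a a' b" for a a' b
  proof -
    obtain k l where kl: "k \<in> hom C (Dom C a) (Dom C r)" "l \<in> hom C (Dom C a) (Dom C s)"
      "\<pi>2 \<cdot> r \<cdot> k = \<pi>2 \<cdot> s \<cdot> l" "\<pi>1 \<cdot> r \<cdot> k = a" "\<pi>1 \<cdot> s \<cdot> l = a'" "f \<cdot> \<pi>2 \<cdot> r \<cdot> k = b"
      using Q PP r(1) s(1) unfolding pullback_mem3_def by auto
    have "Dom C a' = Dom C a"
      using PP s(1) kl(2,5) by auto
    then have "gen_mem2 C \<pi>1 \<pi>2 r a (\<pi>2 \<cdot> r \<cdot> k)" "gen_mem2 C \<pi>1 \<pi>2 s a' (\<pi>2 \<cdot> r \<cdot> k)"
      unfolding gen_mem2_def using PP s(1) r(1) kl by auto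
    moreover have "f \<cdot> (\<pi>2 \<cdot> r \<cdot> k) = b"
      using PP f r(1) kl(1,6) by simp
    ultimately show ?thesis
      by blast
  qed
  note hc = gen_mem2_in_hom[OF product s(1) cd] and he = gen_mem2_in_hom[OF product r(1) ce]
  have n1: "?Q c c (f \<cdot> c)"
    using intro[OF gen_mem2_refl[OF product r, of c] gen_mem2_refl[OF product s, of c]] hc by simp
  have n2: "?Q c e (f \<cdot> d)"
    using intro[OF ce gen_mem2_refl[OF product s, of e]] he fde by simp
  have n3: "?Q d c (f \<cdot> d)"
    using intro[OF gen_mem2_refl[OF product r, of d] cd] hc by simp
  have "locally C (Dom C c) (\<lambda>t. ?Q (c \<cdot> t) (c \<cdot> t) (f \<cdot> d \<cdot> t))"
    using pullback_mem3_majority[OF _ _ _ _ _ n1 n2 n3] PP f r(1) s(1) by simp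
  then show ?thesis
    using f hc by (simp add: elim locally_mono)
qed

lemma gen_mem2_meet_locally:
  assumes f: "f \<in> hom C X Y"
    and xy: "gen_mem2 C \<pi>1 \<pi>2 r x y" and xy': "gen_mem2 C \<pi>1 \<pi>2 s x' y'"
    and fx: "f \<cdot> x = f \<cdot> x'" and fy: "f \<cdot> y = f \<cdot> y'"
  shows "locally C (Dom C x) (\<lambda>t. \<exists>u v. gen_mem2 C \<pi>1 \<pi>2 r u v \<and> gen_mem2 C \<pi>1 \<pi>2 s u v
    \<and> f \<cdot> u = f \<cdot> x \<cdot> t \<and> f \<cdot> v = f \<cdot> y \<cdot> t)"
  using gen_mem2_shared_source[OF f xy xy' fx fy]
proof (rule locally_bind)
  fix t
  assume t: "regular_epi C t" "Cod C t = Dom C x"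
    and "\<exists>c d. gen_mem2 C \<pi>1 \<pi>2 s c d \<and> gen_mem2 C \<pi>1 \<pi>2 r c (y \<cdot> t) \<and> f \<cdot> c = f \<cdot> x \<cdot> t \<and> f \<cdot> d = f \<cdot> y \<cdot> t"
  then obtain c d where cd: "gen_mem2 C \<pi>1 \<pi>2 s c d" and cy: "gen_mem2 C \<pi>1 \<pi>2 r c (y \<cdot> t)"
    and fc: "f \<cdot> c = f \<cdot> x \<cdot> t" and fd: "f \<cdot> d = f \<cdot> y \<cdot> t"
    by blast
  note hxy = gen_mem2_in_hom[OF product r(1) xy] and hc = gen_mem2_in_hom[OF product r(1) cy]
  have t_arr: "t \<in> Arr C"
    using t(1) by (rule regular_epi_arr)
  have dom_c: "Dom C c = Dom C t"
    using hxy hc t(2) t_arr by simp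
  have "f \<cdot> d = f \<cdot> (y \<cdot> t)"
    using fd hxy f t(2) t_arr by simp
  then have "locally C (Dom C c) (\<lambda>t'. \<exists>v. gen_mem2 C \<pi>1 \<pi>2 r (c \<cdot> t') v \<and> gen_mem2 C \<pi>1 \<pi>2 s (c \<cdot> t') v
    \<and> f \<cdot> v = f \<cdot> d \<cdot> t')"
    by (rule gen_mem2_common_pair[OF f cd cy])
  then show "locally C (Dom C t) (\<lambda>t'. \<exists>u v. gen_mem2 C \<pi>1 \<pi>2 r u v \<and> gen_mem2 C \<pi>1 \<pi>2 s u v
    \<and> f \<cdot> u = f \<cdot> x \<cdot> (t \<cdot> t') \<and> f \<cdot> v = f \<cdot> y \<cdot> (t \<cdot> t'))"
    unfolding dom_c
  proof (rule locally_mono)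
    fix t'
    assume t': "regular_epi C t'" "Cod C t' = Dom C t"
      and "\<exists>v. gen_mem2 C \<pi>1 \<pi>2 r (c \<cdot> t') v \<and> gen_mem2 C \<pi>1 \<pi>2 s (c \<cdot> t') v \<and> f \<cdot> v = f \<cdot> d \<cdot> t'"
    then obtain v where v: "gen_mem2 C \<pi>1 \<pi>2 r (c \<cdot> t') v" "gen_mem2 C \<pi>1 \<pi>2 s (c \<cdot> t') v"
      "f \<cdot> v = f \<cdot> d \<cdot> t'"
      by blast
    have "f \<cdot> (c \<cdot> t') = f \<cdot> x \<cdot> (t \<cdot> t')" "f \<cdot> v = f \<cdot> y \<cdot> (t \<cdot> t')"
      using f hxy hc t(2) t_arr t' regular_epi_arr[OF t'(1)] dom_c fc fd v(3) by simp_all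
    then show "\<exists>u v. gen_mem2 C \<pi>1 \<pi>2 r u v \<and> gen_mem2 C \<pi>1 \<pi>2 s u v
      \<and> f \<cdot> u = f \<cdot> x \<cdot> (t \<cdot> t') \<and> f \<cdot> v = f \<cdot> y \<cdot> (t \<cdot> t')"
      using v(1,2) by blast
  qed
qed

end

locale relation_images = reflexive_relations +
  fixes f Y Q \<rho>1 \<rho>2 ff
  assumes f: "f \<in> hom C X Y"
    and codomain: "is_product C Y Y Q \<rho>1 \<rho>2"
    and ff: "ff \<in> hom C P Q" "\<rho>1 \<cdot> ff = f \<cdot> \<pi>1" "\<rho>2 \<cdot> ff = f \<cdot> \<pi>2"
begin

lemma factors_through_meet_locally:
  assumes pb: "is_pullback C r s a b" and z: "z \<in> hom C T Q"
    and zr: "factors_through C z (ff \<cdot> r)" and zs: "factors_through C z (ff \<cdot> s)"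
  shows "locally C T (\<lambda>t. factors_through C (z \<cdot> t) (ff \<cdot> (r \<cdot> a)))"
proof -
  note iff = factors_through_product_map_iff[OF product codomain f ff]
  note PB = pullbackD[OF pb] and PP = productD[OF product] and QQ = productD[OF codomain]
  obtain x y where xy: "gen_mem2 C \<pi>1 \<pi>2 r x y" "f \<cdot> x = \<rho>1 \<cdot> z" "f \<cdot> y = \<rho>2 \<cdot> z"
    using zr iff[OF r(1) z] by blast
  obtain x' y' where xy': "gen_mem2 C \<pi>1 \<pi>2 s x' y'" "f \<cdot> x' = \<rho>1 \<cdot> z" "f \<cdot> y' = \<rho>2 \<cdot> z"
    using zs iff[OF s(1) z] by blast
  note hxy = gen_mem2_in_hom[OF product r(1) xy(1)]
  have dom_x: "Dom C x = T"
    using arg_cong[OF xy(2), of "Dom C"] hxy f z QQ by simp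
  have ra: "r \<cdot> a \<in> hom C (Dom C a) P"
    using PB r(1) by simp
  have "locally C (Dom C x) (\<lambda>t. \<exists>u v. gen_mem2 C \<pi>1 \<pi>2 r u v \<and> gen_mem2 C \<pi>1 \<pi>2 s u v
    \<and> f \<cdot> u = f \<cdot> x \<cdot> t \<and> f \<cdot> v = f \<cdot> y \<cdot> t)"
    using gen_mem2_meet_locally[OF f xy(1) xy'(1)] xy xy' by simp
  then show ?thesis
    unfolding dom_x
  proof (rule locally_mono)
    fix t
    assume t: "regular_epi C t" "Cod C t = T"
      and "\<exists>u v. gen_mem2 C \<pi>1 \<pi>2 r u v \<and> gen_mem2 C \<pi>1 \<pi>2 s u v \<and> f \<cdot> u = f \<cdot> x \<cdot> t \<and> f \<cdot> v = f \<cdot> y \<cdot> t"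
    then obtain u v where uv: "gen_mem2 C \<pi>1 \<pi>2 r u v" "gen_mem2 C \<pi>1 \<pi>2 s u v"
      "f \<cdot> u = f \<cdot> x \<cdot> t" "f \<cdot> v = f \<cdot> y \<cdot> t"
      by blast
    have "gen_mem2 C \<pi>1 \<pi>2 (r \<cdot> a) u v"
      using gen_mem2_meet[OF product pb r(1) uv(1,2)] .
    moreover have "f \<cdot> u = \<rho>1 \<cdot> (z \<cdot> t)" "f \<cdot> v = \<rho>2 \<cdot> (z \<cdot> t)"
      using uv(3,4) hxy f z QQ t(2) regular_epi_arr[OF t(1)] dom_x
      by (simp_all add: xy(2,3))
    ultimately show "factors_through C (z \<cdot> t) (ff \<cdot> (r \<cdot> a))"
      using iff[OF ra, of "z \<cdot> t" "Dom C t"] z t(2) regular_epi_arr[OF t(1)] by auto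
  qed
qed

lemma image_meet_ge:
  assumes pb: "is_pullback C r s a b"
    and iRS: "is_image C (ff \<cdot> (r \<cdot> a)) mRS" and iR: "is_image C (ff \<cdot> r) mR" and iS: "is_image C (ff \<cdot> s) mS"
    and pbm: "is_pullback C mR mS c d"
  shows "factors_through C (mR \<cdot> c) mRS"
proof -
  note PBm = pullbackD[OF pbm]
  obtain eR where mR: "mR \<in> Arr C" and cR: "ff \<cdot> r \<in> hom C (Dom C (ff \<cdot> r)) (Cod C mR)"
    using iR by (rule imageD)
  obtain eRS where cRS: "ff \<cdot> (r \<cdot> a) \<in> hom C (Dom C (ff \<cdot> (r \<cdot> a))) (Cod C mRS)"
    using iRS by (rule imageD)
  have Q: "Cod C mR = Q" "Cod C mRS = Q"
    using cR cRS ff r(1) pullbackD[OF pb] by simp_all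
  let ?h = "mR \<cdot> c"
  have h: "?h \<in> hom C (Dom C c) Q"
    using PBm Q by simp
  have hR: "factors_through C ?h mR"
    unfolding factors_through_def using PBm mR by (intro exI[of _ c]) simp
  have hS: "factors_through C ?h mS"
    unfolding factors_through_def using PBm mR by (intro exI[of _ d]) simp
  have "locally C (Dom C c)
      (\<lambda>t. factors_through C (?h \<cdot> t) (ff \<cdot> r) \<and> factors_through C (?h \<cdot> t) (ff \<cdot> s))"
    using images_local_lift[OF iR iS hR hS] PBm(1-5) mR by simp
  then have "locally C (Dom C c) (\<lambda>t. factors_through C (?h \<cdot> t) (ff \<cdot> (r \<cdot> a)))"
  proof (rule locally_bind)
    fix t
    assume t: "regular_epi C t" "Cod C t = Dom C c"
      and "factors_through C (?h \<cdot> t) (ff \<cdot> r) \<and> factors_through C (?h \<cdot> t) (ff \<cdot> s)"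
    then have "locally C (Dom C t) (\<lambda>t'. factors_through C (?h \<cdot> t \<cdot> t') (ff \<cdot> (r \<cdot> a)))"
      using factors_through_meet_locally[OF pb, of "?h \<cdot> t" "Dom C t"] h regular_epi_arr[OF t(1)] by simp
    then show "locally C (Dom C t) (\<lambda>t'. factors_through C (?h \<cdot> (t \<cdot> t')) (ff \<cdot> (r \<cdot> a)))"
      by (rule locally_mono) (use PBm(1-5) mR t(2) regular_epi_arr[OF t(1)] regular_epi_arr in simp)
  qed
  then show ?thesis
    using factors_through_image[OF iRS, of ?h "Dom C c"] h Q by simp
qed

end

theorem corollary3p5:
  fixes C :: "('o, 'a) category"
  assumes "regular_category C" and "majority_category C"
    and "f \<in> hom C X Y" and "regular_epi C f"
    and "is_product C X X P \<pi>1 \<pi>2" and "is_product C Y Y Q \<rho>1 \<rho>2"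
    and "ff \<in> hom C P Q" and "Comp C \<rho>1 ff = Comp C f \<pi>1" and "Comp C \<rho>2 ff = Comp C f \<pi>2"
    and "mono C r" and "Cod C r = P" and "reflexive_rel C X P \<pi>1 \<pi>2 r"
    and "mono C s" and "Cod C s = P" and "reflexive_rel C X P \<pi>1 \<pi>2 s"
    and "is_pullback C r s a b"
    and "is_image C (Comp C ff (Comp C r a)) mRS"
    and "is_image C (Comp C ff r) mR"
    and "is_image C (Comp C ff s) mS"
    and "is_pullback C mR mS c d"
  shows "sub_eq C mRS (Comp C mR c)"
proof -
  have "r \<in> Arr C" "s \<in> Arr C"
    using assms(10,13) unfolding mono_def by blast+
  then interpret relation_images C X P \<pi>1 \<pi>2 r s f Y Q \<rho>1 \<rho>2 ff
    using assms(1-3,5-9,11,12,14,15) by unfold_locales (simp_all add: regular_category_def hom_def)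
  have le: "factors_through C mRS (mR \<cdot> c)"
    using image_meet_le[OF assms(16) _ assms(17-20)] assms(7,11) by simp
  have ge: "factors_through C (mR \<cdot> c) mRS"
    using image_meet_ge[OF assms(16-20)] .
  have "mR \<cdot> c \<in> Arr C"
    using pullbackD[OF assms(20)] by simp
  moreover obtain k where "mRS \<in> hom C (Dom C mRS) (Cod C (mR \<cdot> c))"
    using factors_throughE[OF le calculation] by blast
  ultimately show ?thesis
    unfolding sub_eq_def sub_le_iff using le ge by simp
qed

end
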